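(* Let $p_1,p_2\in\mathbb{C}$ be linearly independent over $\mathbb{R}$, let $L=\mathbb{Z}p_1+\mathbb{Z}p_2$, and let $\sigma$ be the entire function $$\sigma(z)=z\prod_{\lambda\in L\setminus\{0\}}e^{\frac{z}{\lambda}+\frac{z^2}{2\lambda^2}}\left(1-\frac{z}{\lambda}\right).$$ Then for every $\xi_0\in\mathbb{C}$ and every $j\in\{1,2\}$, $$\frac{\sigma(z)}{\sigma(-\xi_0+z)}\cdot\frac{\sigma(-\xi_0+z+p_j)}{\sigma(z+p_j)}=e^{v_j},$$ as an identity of meromorphic functions of $z$, where $$v_j=-\frac{3\xi_0}{p_j}+\xi_0p_j^2\sum_{\lambda\in L\setminus\{0,-p_j\}}\frac{1}{\lambda(\lambda+p_j)^2}.$$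
   Context: The function $\sigma$ above is the Weierstrass sigma-function of the lattice $L$; the product converges since $\sum_{\lambda\in L\setminus\{0\}}|\lambda|^{-3}<\infty$, and its zero set is exactly $L$. *)

theory Defs
  imports "HOL-Analysis.Analysis"
begin

definition lattice :: "complex \<Rightarrow> complex \<Rightarrow> complex set" where
  "lattice p1 p2 = {of_int m * p1 + of_int n * p2 | m n. True}"

text \<open>The (absolutely convergent)
  product over L - {0} is taken as an unconditional limit of finite partial
  products, i.e. along the net of finite subsets of L - {0}.\<close>
definition weierstrass_sigma :: "complex set \<Rightarrow> complex \<Rightarrow> complex" where
  "weierstrass_sigma L z =
     Lim (finite_subsets_at_top (L - {0}))
       (\<lambda>F. z * (\<Prod>l\<in>F. exp (z / l + z\<^sup>2 / (2 * l\<^sup>2)) * (1 - z / l)))"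

end

theory Submission
  imports Defs "HOL-Complex_Analysis.Weierstrass_Factorization"
begin

text \<open>Write \<open>\<sigma>(z) = z A(z)\<close> with \<open>A(z) = \<Prod>\<^sub>\<lambda> E(z, \<lambda>)\<close> over \<open>\<lambda> \<in> L - {0}\<close> and
  \<open>E(z, \<lambda>) = exp (z/\<lambda> + z\<^sup>2/(2\<lambda>\<^sup>2)) (1 - z/\<lambda>)\<close>. Since \<open>E(z, \<lambda>) - 1 = O(|\<lambda>|\<^sup>-\<^sup>3)\<close> and
  \<open>\<Sum> |\<lambda>|\<^sup>-\<^sup>3 < \<infinity>\<close>, all these products converge unconditionally.
  Shifting the index \<open>\<lambda> \<mapsto> \<lambda> + p\<close> in \<open>A(z + p)\<close> gives
  \<open>\<sigma>(z + p) = - exp (3/2 + 3z/p) c\<^sub>p(z) \<sigma>(z)\<close> with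
  \<open>c\<^sub>p(z) = \<Prod> E(z + p, \<lambda> + p) / E(z, \<lambda>)\<close> over \<open>\<lambda> \<in> L - {0, -p}\<close>.
  The factors of \<open>c\<^sub>p(z) / c\<^sub>p(w)\<close> are the exponentials of
  \<open>-(z - w) p\<^sup>2 / (\<lambda>(\<lambda> + p)\<^sup>2) + (z\<^sup>2 - w\<^sup>2)/2 (1/(\<lambda> + p)\<^sup>2 - 1/\<lambda>\<^sup>2)\<close>, and the second
  series sums to zero by the symmetry \<open>\<lambda> \<mapsto> -\<lambda> - p\<close>; with \<open>w = z - \<xi>\<^sub>0\<close> this is the
  exponent \<open>v\<^sub>j\<close>.\<close>

lemma tendsto_prod_finite_subsets_exp_infsum:
  fixes f g :: "'a \<Rightarrow> complex"
  assumes summable: "g summable_on (I - B)" and "finite B"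
    and f_eq: "\<And>l. l \<in> I - B \<Longrightarrow> f l = exp (g l)"
  shows "((\<lambda>F. \<Prod>l\<in>F. f l) \<longlongrightarrow> (\<Prod>l\<in>I \<inter> B. f l) * exp (infsum g (I - B)))
           (finite_subsets_at_top I)"
proof -
  have "(sum g \<longlongrightarrow> infsum g (I - B)) (finite_subsets_at_top (I - B))"
    using has_sum_infsum[OF summable] unfolding has_sum_def .
  moreover have "filterlim (\<lambda>F. F - B) (finite_subsets_at_top (I - B)) (finite_subsets_at_top I)"
    unfolding filterlim_finite_subsets_at_top eventually_finite_subsets_at_top by blast
  ultimately have "((\<lambda>F. sum g (F - B)) \<longlongrightarrow> infsum g (I - B)) (finite_subsets_at_top I)"
    by (rule filterlim_compose)
  hence "((\<lambda>F. (\<Prod>l\<in>I \<inter> B. f l) * exp (sum g (F - B)))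
           \<longlongrightarrow> (\<Prod>l\<in>I \<inter> B. f l) * exp (infsum g (I - B))) (finite_subsets_at_top I)"
    by (intro tendsto_mult_left tendsto_exp)
  moreover have "\<forall>\<^sub>F F in finite_subsets_at_top I.
      (\<Prod>l\<in>I \<inter> B. f l) * exp (sum g (F - B)) = (\<Prod>l\<in>F. f l)"
    unfolding eventually_finite_subsets_at_top
  proof (intro exI[of _ "I \<inter> B"] conjI allI impI)
    fix F assume F: "finite F \<and> I \<inter> B \<subseteq> F \<and> F \<subseteq> I"
    have "(\<Prod>l\<in>F. f l) = (\<Prod>l\<in>F - (I \<inter> B). f l) * (\<Prod>l\<in>I \<inter> B. f l)"
      using F by (intro prod.subset_diff) auto
    also have "F - (I \<inter> B) = F - B" using F by auto
    also have "(\<Prod>l\<in>F - B. f l) = (\<Prod>l\<in>F - B. exp (g l))"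
      using F f_eq by (intro prod.cong) auto
    also have "\<dots> = exp (sum g (F - B))"
      using F by (simp add: exp_sum)
    finally show "(\<Prod>l\<in>I \<inter> B. f l) * exp (sum g (F - B)) = (\<Prod>l\<in>F. f l)" by simp
  qed (use \<open>finite B\<close> in auto)
  ultimately show ?thesis by (rule Lim_transform_eventually)
qed

lemma tendsto_prod_finite_subsets_remove:
  fixes f :: "'a \<Rightarrow> complex"
  assumes lim: "((\<lambda>F. \<Prod>l\<in>F. f l) \<longlongrightarrow> a) (finite_subsets_at_top I)"
    and "J \<subseteq> I" "finite (I - J)" "(\<Prod>l\<in>I - J. f l) \<noteq> 0"
  shows "((\<lambda>F. \<Prod>l\<in>F. f l) \<longlongrightarrow> a / (\<Prod>l\<in>I - J. f l)) (finite_subsets_at_top J)"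
proof -
  have "filterlim (\<lambda>F. F \<union> (I - J)) (finite_subsets_at_top I) (finite_subsets_at_top J)"
    unfolding filterlim_finite_subsets_at_top eventually_finite_subsets_at_top
  proof (intro allI impI, elim conjE)
    fix X assume "finite X" "X \<subseteq> I"
    thus "\<exists>X'. finite X' \<and> X' \<subseteq> J \<and> (\<forall>y. finite y \<and> X' \<subseteq> y \<and> y \<subseteq> J \<longrightarrow>
            finite (y \<union> (I - J)) \<and> X \<subseteq> y \<union> (I - J) \<and> y \<union> (I - J) \<subseteq> I)"
      using assms(2,3) by (intro exI[of _ "X \<inter> J"]) auto
  qed
  with lim have "((\<lambda>F. \<Prod>l\<in>F \<union> (I - J). f l) \<longlongrightarrow> a) (finite_subsets_at_top J)"
    by (rule filterlim_compose[unfolded o_def])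
  hence "((\<lambda>F. (\<Prod>l\<in>F \<union> (I - J). f l) / (\<Prod>l\<in>I - J. f l))
           \<longlongrightarrow> a / (\<Prod>l\<in>I - J. f l)) (finite_subsets_at_top J)"
    using assms(4) by (intro tendsto_divide tendsto_const)
  moreover have "\<forall>\<^sub>F F in finite_subsets_at_top J.
      (\<Prod>l\<in>F \<union> (I - J). f l) / (\<Prod>l\<in>I - J. f l) = (\<Prod>l\<in>F. f l)"
  proof (intro eventually_finite_subsets_at_top_weakI)
    fix F assume "finite F" "F \<subseteq> J"
    hence "(\<Prod>l\<in>F \<union> (I - J). f l) = (\<Prod>l\<in>F. f l) * (\<Prod>l\<in>I - J. f l)"
      using assms(3) by (intro prod.union_disjoint) auto
    thus "(\<Prod>l\<in>F \<union> (I - J). f l) / (\<Prod>l\<in>I - J. f l) = (\<Prod>l\<in>F. f l)"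
      using assms(4) by simp
  qed
  ultimately show ?thesis by (rule Lim_transform_eventually)
qed

lemma tendsto_prod_finite_subsets_reindex:
  fixes f :: "'b \<Rightarrow> complex"
  assumes lim: "((\<lambda>F. \<Prod>l\<in>F. f l) \<longlongrightarrow> a) (finite_subsets_at_top (h ` A))"
    and inj: "inj_on h A"
  shows "((\<lambda>F. \<Prod>l\<in>F. f (h l)) \<longlongrightarrow> a) (finite_subsets_at_top A)"
proof -
  have "((\<lambda>F. \<Prod>l\<in>h ` F. f l) \<longlongrightarrow> a) (finite_subsets_at_top A)"
    using lim by (simp add: filtermap_image_finite_subsets_at_top[OF inj, symmetric] filterlim_filtermap)
  moreover have "\<forall>\<^sub>F F in finite_subsets_at_top A. (\<Prod>l\<in>h ` F. f l) = (\<Prod>l\<in>F. f (h l))"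
  proof (intro eventually_finite_subsets_at_top_weakI)
    fix F assume "F \<subseteq> A"
    with inj show "(\<Prod>l\<in>h ` F. f l) = (\<Prod>l\<in>F. f (h l))"
      by (simp add: prod.reindex inj_on_subset)
  qed
  ultimately show ?thesis by (rule Lim_transform_eventually)
qed

lemma summable_on_int_powr:
  assumes "s < -1"
  shows "(\<lambda>k::int. (1 + real_of_int \<bar>k\<bar>) powr s) summable_on UNIV"
proof -
  define f where "f = (\<lambda>k::int. (1 + real_of_int \<bar>k\<bar>) powr s)"
  have "summable (\<lambda>n. real (Suc n) powr s)"
    using assms by (subst summable_Suc_iff) (simp add: summable_real_powr_iff)
  hence "(\<lambda>n::nat. (1 + real n) powr s) summable_on UNIV"
    by (subst summable_on_UNIV_nonneg_real_iff) auto
  hence nat: "(f \<circ> int) summable_on UNIV" "(f \<circ> (\<lambda>n. - int n)) summable_on UNIV"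
    by (simp_all add: f_def o_def)
  have "f summable_on range int \<union> range (\<lambda>n. - int n)"
    using nat by (intro summable_on_union) (simp_all add: summable_on_reindex inj_on_def)
  also have "range int \<union> range (\<lambda>n. - int n) = UNIV"
  proof (intro set_eqI iffI)
    fix k :: int
    show "k \<in> range int \<union> range (\<lambda>n. - int n)"
      by (cases "k \<ge> 0") (auto intro: image_eqI[of _ int "nat k"] image_eqI[of _ _ "nat (- k)"])
  qed auto
  finally show ?thesis unfolding f_def .
qed

lemma inverse_cube_le_powr_product:
  fixes x y :: real
  assumes "x \<ge> 0" "y \<ge> 0" "x + y \<ge> 1"
  shows "1 / (x + y) ^ 3 \<le> 8 * ((1 + x) powr (-3/2) * (1 + y) powr (-3/2))"
proof -
  define t where "t = 2 * (x + y)"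
  have t: "t > 0" using assms by (simp add: t_def)
  have "(1 + x) * (1 + y) \<le> (1 + (x + y))\<^sup>2"
    using assms by (simp add: mult_mono power2_eq_square)
  also have "\<dots> \<le> t\<^sup>2"
    using assms by (intro power_mono) (auto simp: t_def)
  finally have "(t\<^sup>2) powr (-3/2) \<le> ((1 + x) * (1 + y)) powr (-3/2)"
    using assms by (intro powr_mono2') auto
  also have "(t\<^sup>2) powr (-3/2) = (t powr 2) powr (-3/2)"
    using t by simp
  also have "\<dots> = t powr (- 3)"
    by (simp add: powr_powr)
  also have "\<dots> = 1 / t ^ 3"
    using t by (simp add: powr_minus_divide)
  also have "((1 + x) * (1 + y)) powr (-3/2) = (1 + x) powr (-3/2) * (1 + y) powr (-3/2)"
    using assms by (simp add: powr_mult)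
  finally have "1 / t ^ 3 \<le> (1 + x) powr (-3/2) * (1 + y) powr (-3/2)"
    using t by simp
  moreover have "t ^ 3 = 8 * (x + y) ^ 3"
    unfolding t_def power_mult_distrib by simp
  ultimately show ?thesis by (simp add: field_simps)
qed

definition sigma_factor :: "complex \<Rightarrow> complex \<Rightarrow> complex" where
  "sigma_factor z l = exp (z / l + z\<^sup>2 / (2 * l\<^sup>2)) * (1 - z / l)"

lemma sigma_factor_eq_weierstrass_factor: "sigma_factor z l = weierstrass_factor 2 (z / l)"
  by (simp add: sigma_factor_def weierstrass_factor_def numeral_2_eq_2 field_simps)

lemma sigma_factor_eq_0_iff: "l \<noteq> 0 \<Longrightarrow> sigma_factor z l = 0 \<longleftrightarrow> z = l"
  by (auto simp: sigma_factor_def field_simps)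

lemma norm_divide_le_half:
  fixes z l :: complex
  shows "2 * norm z < norm l \<Longrightarrow> norm (z / l) \<le> 1 / 2"
  using norm_ge_zero[of z] by (simp add: norm_divide divide_le_eq)

lemma norm_sigma_factor_minus_1_le:
  assumes "2 * norm z < norm l"
  shows "norm (sigma_factor z l - 1) \<le> 3 * norm z ^ 3 / norm l ^ 3"
proof -
  have "norm (sigma_factor z l - 1) \<le> 3 * norm (z / l) ^ Suc 2"
    unfolding sigma_factor_eq_weierstrass_factor
    by (rule weierstrass_factor_bound[OF norm_divide_le_half[OF assms]])
  thus ?thesis by (simp add: norm_divide power_divide)
qed

lemma norm_sigma_factor_minus_1_less:
  assumes "2 * norm z < norm l"
  shows "norm (sigma_factor z l - 1) < 1 / 2"
proof -
  have "3 * norm z ^ 3 / norm l ^ 3 = 3 * norm (z / l) ^ 3"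
    by (simp add: norm_divide power_divide)
  also have "\<dots> \<le> 3 * (1 / 2) ^ 3"
    using norm_divide_le_half[OF assms] by (intro mult_left_mono power_mono) auto
  also have "\<dots> < 1 / 2"
    by (simp add: power3_eq_cube)
  finally show ?thesis
    using norm_sigma_factor_minus_1_le[OF assms] by linarith
qed

lemma norm_Ln_sigma_factor_le:
  assumes "2 * norm z < norm l"
  shows "norm (Ln (sigma_factor z l)) \<le> 6 * norm z ^ 3 / norm l ^ 3"
proof -
  have "norm (Ln (1 + (sigma_factor z l - 1))) \<le> 2 * norm (sigma_factor z l - 1)"
    using norm_sigma_factor_minus_1_less[OF assms] by (intro norm_Ln_le) simp
  with norm_sigma_factor_minus_1_le[OF assms] show ?thesis by simp
qed

lemma sigma_factor_period_ratio:
  assumes "p \<noteq> 0" "z + p \<noteq> 0"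
  shows "sigma_factor (z + p) p / sigma_factor z (- p) = - exp (3 / 2 + 3 * z / p) * z / (z + p)"
proof -
  define X where "X = (z + p) / p + (z + p)\<^sup>2 / (2 * p\<^sup>2)"
  define Y where "Y = z / (- p) + z\<^sup>2 / (2 * (- p)\<^sup>2)"
  have "X - Y = 3 / 2 + 3 * z / p"
    using assms by (simp add: X_def Y_def field_simps power2_eq_square)
  have "sigma_factor (z + p) p = exp X * (- z / p)" "sigma_factor z (- p) = exp Y * ((z + p) / p)"
    using assms by (simp_all add: sigma_factor_def X_def Y_def field_simps)
  hence "sigma_factor (z + p) p / sigma_factor z (- p) = exp X / exp Y * ((- z / p) / ((z + p) / p))"
    by simp
  also have "exp X / exp Y = exp (3 / 2 + 3 * z / p)"
    by (simp add: exp_diff[symmetric] \<open>X - Y = 3 / 2 + 3 * z / p\<close>)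
  also have "(- z / p) / ((z + p) / p) = - z / (z + p)"
    using assms by (simp add: field_simps)
  finally show ?thesis by simp
qed

lemma sigma_factor_shift_quotient:
  assumes "m \<noteq> 0" "m + p \<noteq> 0" "m \<noteq> z"
  shows "sigma_factor (z + p) (m + p) / sigma_factor z m =
     exp ((z + p) / (m + p) + (z + p)\<^sup>2 / (2 * (m + p)\<^sup>2) - (z / m + z\<^sup>2 / (2 * m\<^sup>2))) * (m / (m + p))"
proof -
  \<comment> \<open>Stated for \<open>q\<close> in place of \<open>m + p\<close>: \<open>field_simps\<close> can use \<open>q \<noteq> 0\<close>, but not \<open>m + p \<noteq> 0\<close>
    once it has rewritten the sum.\<close>
  have "(1 - (z + (q - m)) / q) / (1 - z / m) = m / q" if "q \<noteq> 0" for q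
  proof -
    have "1 - (z + (q - m)) / q = (m - z) / q" "1 - z / m = (m - z) / m"
      using assms that by (simp_all add: field_simps)
    thus ?thesis using assms that by (simp add: field_simps)
  qed
  from this[of "m + p"] assms have "(1 - (z + p) / (m + p)) / (1 - z / m) = m / (m + p)"
    by simp
  moreover have "sigma_factor (z + p) (m + p) / sigma_factor z m =
      exp ((z + p) / (m + p) + (z + p)\<^sup>2 / (2 * (m + p)\<^sup>2)) / exp (z / m + z\<^sup>2 / (2 * m\<^sup>2))
      * ((1 - (z + p) / (m + p)) / (1 - z / m))"
    unfolding sigma_factor_def by (simp only: times_divide_times_eq)
  ultimately show ?thesis
    by (simp only: exp_diff)
qed

lemma sigma_factor_exponent_difference:
  fixes z w m p :: complex
  assumes "m \<noteq> 0" "m + p \<noteq> 0"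
  shows "((z + p) / (m + p) + (z + p)\<^sup>2 / (2 * (m + p)\<^sup>2) - (z / m + z\<^sup>2 / (2 * m\<^sup>2)))
       - ((w + p) / (m + p) + (w + p)\<^sup>2 / (2 * (m + p)\<^sup>2) - (w / m + w\<^sup>2 / (2 * m\<^sup>2)))
       = - (z - w) * p\<^sup>2 / (m * (m + p)\<^sup>2) + (z\<^sup>2 - w\<^sup>2) / 2 * (1 / (m + p)\<^sup>2 - 1 / m\<^sup>2)"
proof -
  have "((z + (q - m)) / q + (z + (q - m))\<^sup>2 / (2 * q\<^sup>2) - (z / m + z\<^sup>2 / (2 * m\<^sup>2)))
       - ((w + (q - m)) / q + (w + (q - m))\<^sup>2 / (2 * q\<^sup>2) - (w / m + w\<^sup>2 / (2 * m\<^sup>2)))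
       = - (z - w) * (q - m)\<^sup>2 / (m * q\<^sup>2) + (z\<^sup>2 - w\<^sup>2) / 2 * (1 / q\<^sup>2 - 1 / m\<^sup>2)"
    if "q \<noteq> 0" for q
    using assms that by (simp add: field_simps power2_eq_square)
  from this[of "m + p"] assms show ?thesis by simp
qed

lemma norm_shift_ge_half:
  fixes m p :: complex
  assumes "2 * norm p < norm m"
  shows "norm m / 2 < norm (m + p)"
  using assms norm_diff_ineq[of m p] by simp

lemma norm_inverse_mult_shift_square_le:
  fixes m p :: complex
  assumes "2 * norm p < norm m"
  shows "norm (1 / (m * (m + p)\<^sup>2)) \<le> 4 / norm m ^ 3"
proof -
  have m: "norm m > 0" using assms norm_ge_zero[of p] by linarith
  have "norm (1 / (m * (m + p)\<^sup>2)) = 1 / (norm m * norm (m + p) ^ 2)"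
    by (simp add: norm_divide norm_mult norm_power)
  also have "\<dots> \<le> 1 / (norm m * (norm m / 2) ^ 2)"
    using m norm_shift_ge_half[OF assms]
    by (intro frac_le mult_left_mono power_mono mult_pos_pos) auto
  also have "\<dots> = 4 / norm m ^ 3"
    using m by (simp add: field_simps power2_eq_square power3_eq_cube)
  finally show ?thesis .
qed

lemma norm_inverse_shift_square_diff_le:
  fixes m p :: complex
  assumes "2 * norm p < norm m"
  shows "norm (1 / (m + p)\<^sup>2 - 1 / m\<^sup>2) \<le> 12 * norm p / norm m ^ 3"
proof -
  have m: "norm m > 0" and mp: "m + p \<noteq> 0"
    using assms norm_shift_ge_half[OF assms] norm_ge_zero[of p] by auto
  have "1 / q\<^sup>2 - 1 / m\<^sup>2 = - (q - m) * (2 * m + (q - m)) / (m\<^sup>2 * q\<^sup>2)" if "q \<noteq> 0" for q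
    using m that by (simp add: field_simps power2_eq_square)
  from this[of "m + p"] mp
  have difference: "1 / (m + p)\<^sup>2 - 1 / m\<^sup>2 = - p * (2 * m + p) / (m\<^sup>2 * (m + p)\<^sup>2)"
    by simp
  have "norm (2 * m + p) \<le> 2 * norm m + norm p"
    using norm_triangle_ineq[of "2 * m" p] by simp
  hence "norm (2 * m + p) \<le> 3 * norm m"
    using assms norm_ge_zero[of p] by linarith
  have "norm (1 / (m + p)\<^sup>2 - 1 / m\<^sup>2) = norm p * norm (2 * m + p) / (norm m ^ 2 * norm (m + p) ^ 2)"
    unfolding difference by (simp add: norm_divide norm_mult norm_power)
  also have "\<dots> \<le> norm p * (3 * norm m) / (norm m ^ 2 * (norm m / 2) ^ 2)"
    using m norm_shift_ge_half[OF assms] \<open>norm (2 * m + p) \<le> 3 * norm m\<close>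
    by (intro frac_le mult_left_mono power_mono mult_pos_pos) auto
  also have "\<dots> = 12 * norm p / norm m ^ 3"
    using m by (simp add: field_simps power2_eq_square power3_eq_cube)
  finally show ?thesis .
qed

locale lattice_basis =
  fixes p1 p2 :: complex
  assumes independent: "\<forall>a b :: real. of_real a * p1 + of_real b * p2 = 0 \<longrightarrow> a = 0 \<and> b = 0"
begin

abbreviation L :: "complex set" where "L \<equiv> lattice p1 p2"

definition lattice_point :: "int \<times> int \<Rightarrow> complex" where
  "lattice_point = (\<lambda>(m, n). of_int m * p1 + of_int n * p2)"

lemma lattice_eq_range: "L = range lattice_point"
  by (auto simp: lattice_def lattice_point_def)

lemma inj_lattice_point: "inj lattice_point"
proof (rule injI)
  fix x y assume eq: "lattice_point x = lattice_point y"
  obtain m n m' n' where xy: "x = (m, n)" "y = (m', n')" by (cases x, cases y)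
  with eq have "of_real (of_int (m - m')) * p1 + of_real (of_int (n - n')) * p2 = 0"
    by (simp add: lattice_point_def algebra_simps)
  from independent[rule_format, OF this] xy show "x = y" by simp
qed

lemma lattice_point_eq_0_iff: "lattice_point x = 0 \<longleftrightarrow> x = (0, 0)"
  using injD[OF inj_lattice_point, of x "(0, 0)"] by (auto simp: lattice_point_def)

lemma zero_in_lattice [simp]: "0 \<in> L"
  using lattice_point_eq_0_iff by (auto simp: lattice_eq_range)

lemma basis_in_lattice [simp]: "p1 \<in> L" "p2 \<in> L"
  by (auto simp: lattice_def intro: exI[of _ 0] exI[of _ 1])

lemma lattice_add: "a \<in> L \<Longrightarrow> b \<in> L \<Longrightarrow> a + b \<in> L"
  unfolding lattice_def
  by clarify (rule exI[of _ "_ + _"], rule exI[of _ "_ + _"], simp add: algebra_simps)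

lemma lattice_uminus: "a \<in> L \<Longrightarrow> - a \<in> L"
  unfolding lattice_def
  by clarify (rule exI[of _ "- _"], rule exI[of _ "- _"], simp add: algebra_simps)

lemma lattice_diff: "a \<in> L \<Longrightarrow> b \<in> L \<Longrightarrow> a - b \<in> L"
  using lattice_add[of a "- b"] lattice_uminus[of b] by simp

lemma basis_nonzero: "p1 \<noteq> 0" "p2 \<noteq> 0"
  using independent[rule_format, of 1 0] independent[rule_format, of 0 1] by auto

text \<open>The coefficients of a lattice point are controlled by its modulus: the imaginary part of
  \<open>cnj p1 * l\<close> (resp. \<open>cnj p2 * l\<close>) isolates \<open>n\<close> (resp. \<open>m\<close>), and
  \<open>Im (cnj p1 * p2) \<noteq> 0\<close> by independence.\<close>
lemma lattice_coeff_bound: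
  obtains C where "C > 0" "\<And>m n. real_of_int (\<bar>m\<bar> + \<bar>n\<bar>) \<le> C * norm (lattice_point (m, n))"
proof
  define d where "d = Im (cnj p1 * p2)"
  have "d \<noteq> 0"
  proof
    assume "d = 0"
    have "Im (p2 / p1) = d / (norm p1)\<^sup>2"
      by (simp add: d_def Im_divide cmod_power2 algebra_simps)
    with \<open>d = 0\<close> have "p2 / p1 = of_real (Re (p2 / p1))"
      by (simp add: complex_eq_iff)
    hence "p2 = of_real (Re (p2 / p1)) * p1"
      using basis_nonzero by (simp add: field_simps)
    hence "of_real (Re (p2 / p1)) * p1 + of_real (-1) * p2 = 0" by simp
    from independent[rule_format, OF this] show False by simp
  qed
  show "(norm p1 + norm p2) / \<bar>d\<bar> > 0"
    using \<open>d \<noteq> 0\<close> basis_nonzero by (simp add: add_pos_nonneg)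
  fix m n :: int
  define l where "l = lattice_point (m, n)"
  have "Im (cnj p1 * l) = of_int n * d"
    by (simp add: l_def lattice_point_def d_def algebra_simps)
  hence "\<bar>of_int n\<bar> * \<bar>d\<bar> \<le> norm p1 * norm l"
    by (metis abs_Im_le_cmod abs_mult complex_mod_cnj norm_mult)
  moreover have "Im (cnj p2 * l) = - of_int m * d"
    by (simp add: l_def lattice_point_def d_def algebra_simps)
  hence "\<bar>of_int m\<bar> * \<bar>d\<bar> \<le> norm p2 * norm l"
    by (metis abs_Im_le_cmod abs_minus_cancel abs_mult complex_mod_cnj mult_minus_left norm_mult)
  ultimately have "real_of_int (\<bar>m\<bar> + \<bar>n\<bar>) * \<bar>d\<bar> \<le> (norm p1 + norm p2) * norm l"
    by (simp add: algebra_simps)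
  with \<open>d \<noteq> 0\<close> show "real_of_int (\<bar>m\<bar> + \<bar>n\<bar>) \<le> (norm p1 + norm p2) / \<bar>d\<bar> * norm l"
    by (simp add: field_simps)
qed

lemma finite_lattice_ball: "finite {l \<in> L. norm l \<le> R}"
proof -
  obtain C where C: "C > 0" "\<And>m n. real_of_int (\<bar>m\<bar> + \<bar>n\<bar>) \<le> C * norm (lattice_point (m, n))"
    using lattice_coeff_bound by blast
  define k where "k = \<lceil>C * R\<rceil>"
  have "{l \<in> L. norm l \<le> R} \<subseteq> lattice_point ` ({-k..k} \<times> {-k..k})"
  proof
    fix l assume l: "l \<in> {l \<in> L. norm l \<le> R}"
    then obtain m n where mn: "l = lattice_point (m, n)" by (auto simp: lattice_eq_range)
    have "real_of_int (\<bar>m\<bar> + \<bar>n\<bar>) \<le> C * norm l"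
      using C(2)[of m n] mn by simp
    also have "\<dots> \<le> C * R"
      using l C(1) by (intro mult_left_mono) auto
    finally have "real_of_int (\<bar>m\<bar> + \<bar>n\<bar>) \<le> C * R" .
    hence "\<bar>m\<bar> + \<bar>n\<bar> \<le> k" unfolding k_def by linarith
    hence "(m, n) \<in> {-k..k} \<times> {-k..k}" by auto
    with mn show "l \<in> lattice_point ` ({-k..k} \<times> {-k..k})" by auto
  qed
  thus ?thesis by (rule finite_subset) auto
qed

lemma summable_inverse_norm_cube: "(\<lambda>l. 1 / norm l ^ 3) summable_on (L - {0})"
proof -
  obtain C where C: "C > 0" "\<And>m n. real_of_int (\<bar>m\<bar> + \<bar>n\<bar>) \<le> C * norm (lattice_point (m, n))"
    using lattice_coeff_bound by blast
  define f where "f = (\<lambda>k::int. (1 + real_of_int \<bar>k\<bar>) powr (-3/2))"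
  have f_nonneg: "0 \<le> f k" for k
    by (simp add: f_def)
  have f_summable: "f summable_on UNIV"
    unfolding f_def by (rule summable_on_int_powr) simp
  have "(\<lambda>(m, n). f m * f n) summable_on UNIV \<times> UNIV"
    by (rule summable_on_SigmaI[where g = "\<lambda>m. f m * infsum f UNIV"])
       (simp_all add: f_nonneg has_sum_cmult_right[OF has_sum_infsum[OF f_summable]]
          summable_on_cmult_left[OF f_summable])
  hence "(\<lambda>(m, n). f m * f n) summable_on UNIV - {(0, 0)}"
    by (rule summable_on_subset) simp
  hence majorant: "(\<lambda>x. 8 * C ^ 3 * (case x of (m, n) \<Rightarrow> f m * f n)) summable_on UNIV - {(0, 0)}"
    by (rule summable_on_cmult_right)
  have bound: "1 / norm (lattice_point (m, n)) ^ 3 \<le> 8 * C ^ 3 * (f m * f n)"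
    if "(m, n) \<noteq> (0, 0)" for m n
  proof -
    define s where "s = real_of_int (\<bar>m\<bar> + \<bar>n\<bar>)"
    have "s \<ge> 1" using that by (auto simp: s_def)
    have "s / C \<le> norm (lattice_point (m, n))"
      using C(1) C(2)[of m n] by (simp add: s_def field_simps)
    hence "1 / norm (lattice_point (m, n)) ^ 3 \<le> 1 / (s / C) ^ 3"
      using C(1) \<open>s \<ge> 1\<close> by (intro frac_le power_mono) auto
    also have "\<dots> = C ^ 3 * (1 / s ^ 3)" by (simp add: power_divide)
    also have "\<dots> \<le> C ^ 3 * (8 * (f m * f n))"
      using C(1) \<open>s \<ge> 1\<close> inverse_cube_le_powr_product[of "\<bar>m\<bar>" "\<bar>n\<bar>"]
      by (intro mult_left_mono) (auto simp: s_def f_def)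
    finally show ?thesis by simp
  qed
  have "((\<lambda>l. 1 / norm l ^ 3) \<circ> lattice_point) summable_on UNIV - {(0, 0)}"
    by (rule summable_on_comparison_test[OF majorant]) (auto intro!: bound)
  moreover have "L - {0} = lattice_point ` (UNIV - {(0, 0)})"
    by (auto simp: lattice_eq_range lattice_point_eq_0_iff)
  ultimately show ?thesis
    using inj_lattice_point by (simp add: summable_on_reindex inj_on_subset)
qed

lemma summable_on_lattice_cubic_decay:
  fixes g :: "complex \<Rightarrow> complex"
  assumes "A \<subseteq> L - {0}" "\<And>l. l \<in> A \<Longrightarrow> R < norm l \<Longrightarrow> norm (g l) \<le> K / norm l ^ 3"
  shows "g summable_on A"
proof -
  define B where "B = {l \<in> L. norm l \<le> R}"
  have "(\<lambda>l. K * (1 / norm l ^ 3)) summable_on (A - B)"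
    using assms(1) by (intro summable_on_cmult_right summable_on_subset[OF summable_inverse_norm_cube]) auto
  hence "(\<lambda>l. norm (g l)) summable_on (A - B)"
    by (rule Infinite_Sum.abs_summable_on_comparison_test') (use assms in \<open>auto simp: B_def\<close>)
  hence "g summable_on (A - B)" by (rule abs_summable_summable)
  moreover have "g summable_on (A \<inter> B)"
    using finite_lattice_ball[of R] by (simp add: B_def)
  ultimately have "g summable_on (A - B) \<union> (A \<inter> B)"
    by (rule summable_on_union)
  thus ?thesis by (simp add: Un_Diff_Int)
qed

lemma convergent_sigma_factors:
  "\<exists>a. ((\<lambda>F. \<Prod>l\<in>F. sigma_factor z l) \<longlongrightarrow> a) (finite_subsets_at_top (L - {0})) \<and> (z \<notin> L \<longrightarrow> a \<noteq> 0)"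
proof -
  define B where "B = {l \<in> L. norm l \<le> 2 * norm z}"
  have far: "2 * norm z < norm l" if "l \<in> L - {0} - B" for l
    using that by (auto simp: B_def)
  have nonzero: "sigma_factor z l \<noteq> 0" if "l \<in> L - {0} - B" for l
    using norm_sigma_factor_minus_1_less[OF far[OF that]] by auto
  have "(\<lambda>l. Ln (sigma_factor z l)) summable_on (L - {0} - B)"
    by (rule summable_on_lattice_cubic_decay[where R = "2 * norm z" and K = "6 * norm z ^ 3"])
       (auto intro: norm_Ln_sigma_factor_le)
  hence "((\<lambda>F. \<Prod>l\<in>F. sigma_factor z l) \<longlongrightarrow>
           (\<Prod>l\<in>(L - {0}) \<inter> B. sigma_factor z l) * exp (infsum (\<lambda>l. Ln (sigma_factor z l)) (L - {0} - B)))
         (finite_subsets_at_top (L - {0}))"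
    by (rule tendsto_prod_finite_subsets_exp_infsum)
       (use nonzero finite_lattice_ball[of "2 * norm z"] in \<open>simp_all add: B_def\<close>)
  moreover have "(\<Prod>l\<in>(L - {0}) \<inter> B. sigma_factor z l) \<noteq> 0" if "z \<notin> L"
    using that finite_lattice_ball[of "2 * norm z"] by (auto simp: B_def sigma_factor_eq_0_iff)
  ultimately show ?thesis by auto
qed

definition sigma_product :: "complex \<Rightarrow> complex" where
  "sigma_product z = Lim (finite_subsets_at_top (L - {0})) (\<lambda>F. \<Prod>l\<in>F. sigma_factor z l)"

lemma tendsto_sigma_product:
  "((\<lambda>F. \<Prod>l\<in>F. sigma_factor z l) \<longlongrightarrow> sigma_product z) (finite_subsets_at_top (L - {0}))"
  using convergent_sigma_factors[of z] unfolding sigma_product_def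
  by (metis finite_subsets_at_top_neq_bot tendsto_Lim)

lemma sigma_product_nonzero: "z \<notin> L \<Longrightarrow> sigma_product z \<noteq> 0"
  using convergent_sigma_factors[of z] tendsto_sigma_product[of z]
  by (metis finite_subsets_at_top_neq_bot tendsto_unique)

lemma weierstrass_sigma_eq: "weierstrass_sigma L z = z * sigma_product z"
proof -
  have "((\<lambda>F. z * (\<Prod>l\<in>F. sigma_factor z l)) \<longlongrightarrow> z * sigma_product z) (finite_subsets_at_top (L - {0}))"
    by (intro tendsto_mult_left tendsto_sigma_product)
  thus ?thesis
    unfolding weierstrass_sigma_def sigma_factor_def by (simp add: tendsto_Lim)
qed

lemma weierstrass_sigma_eq_0_iff: "weierstrass_sigma L z = 0 \<longleftrightarrow> z \<in> L"
proof
  assume "z \<in> L"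
  show "weierstrass_sigma L z = 0"
  proof (cases "z = 0")
    case False
    have "\<forall>\<^sub>F F in finite_subsets_at_top (L - {0}). (\<Prod>l\<in>F. sigma_factor z l) = 0"
      unfolding eventually_finite_subsets_at_top
      using \<open>z \<in> L\<close> False by (intro exI[of _ "{z}"]) (auto simp: sigma_factor_def)
    hence "((\<lambda>F. \<Prod>l\<in>F. sigma_factor z l) \<longlongrightarrow> 0) (finite_subsets_at_top (L - {0}))"
      by (simp add: tendsto_eventually)
    hence "sigma_product z = 0"
      using tendsto_sigma_product finite_subsets_at_top_neq_bot tendsto_unique by metis
    thus ?thesis by (simp add: weierstrass_sigma_eq)
  qed (simp add: weierstrass_sigma_eq)
next
  assume "weierstrass_sigma L z = 0"
  thus "z \<in> L"
    using sigma_product_nonzero[of z] by (auto simp: weierstrass_sigma_eq)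
qed

lemma lattice_minus_0_eq_image_shift: "p \<in> L \<Longrightarrow> L - {0} = (\<lambda>m. m + p) ` (L - {- p})"
proof (intro set_eqI iffI)
  fix l assume "p \<in> L" "l \<in> L - {0}"
  hence "l - p \<in> L - {- p}" using lattice_diff by auto
  thus "l \<in> (\<lambda>m. m + p) ` (L - {- p})" by (intro image_eqI[of _ _ "l - p"]) auto
qed (auto simp: lattice_add add_eq_0_iff)

text \<open>\<open>shift_factor p z\<close> is the product of \<open>sigma_factor (z + p) (m + p) / sigma_factor z m\<close> over
  \<open>m \<in> L - {0, - p}\<close>; the two factors divided out are the ones the index
  shift \<open>m \<mapsto> m + p\<close> leaves unmatched.\<close>
definition shift_factor :: "complex \<Rightarrow> complex \<Rightarrow> complex" where
  "shift_factor p z =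
     (sigma_product (z + p) / sigma_factor (z + p) p) / (sigma_product z / sigma_factor z (- p))"

lemma tendsto_shift_factor:
  assumes "p \<in> L" "p \<noteq> 0" "z \<notin> L"
  shows "((\<lambda>F. \<Prod>m\<in>F. sigma_factor (z + p) (m + p) / sigma_factor z m) \<longlongrightarrow> shift_factor p z)
           (finite_subsets_at_top (L - {0, - p}))"
proof -
  have "- p \<in> L" "z + p \<notin> L" "z \<noteq> - p"
    using assms lattice_uminus lattice_diff[of "z + p" p] by force+
  hence nonzero: "sigma_factor z (- p) \<noteq> 0" "sigma_factor (z + p) p \<noteq> 0"
    using assms by (auto simp: sigma_factor_eq_0_iff)
  have "(L - {0}) - (L - {0, - p}) = {- p}"
    using \<open>- p \<in> L\<close> assms(2) by auto
  with tendsto_prod_finite_subsets_remove[OF tendsto_sigma_product, of "L - {0, - p}"] nonzero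
  have lim_z: "((\<lambda>F. \<Prod>m\<in>F. sigma_factor z m) \<longlongrightarrow> sigma_product z / sigma_factor z (- p))
                 (finite_subsets_at_top (L - {0, - p}))"
    by auto
  have "((\<lambda>F. \<Prod>l\<in>F. sigma_factor (z + p) l) \<longlongrightarrow> sigma_product (z + p))
          (finite_subsets_at_top ((\<lambda>m. m + p) ` (L - {- p})))"
    using tendsto_sigma_product lattice_minus_0_eq_image_shift[OF assms(1)] by simp
  hence "((\<lambda>F. \<Prod>m\<in>F. sigma_factor (z + p) (m + p)) \<longlongrightarrow> sigma_product (z + p))
          (finite_subsets_at_top (L - {- p}))"
    by (rule tendsto_prod_finite_subsets_reindex) (simp add: inj_on_def)
  moreover have "(L - {- p}) - (L - {0, - p}) = {0}"
    using assms(2) by auto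
  ultimately have lim_zp: "((\<lambda>F. \<Prod>m\<in>F. sigma_factor (z + p) (m + p))
                              \<longlongrightarrow> sigma_product (z + p) / sigma_factor (z + p) p)
                            (finite_subsets_at_top (L - {0, - p}))"
    using tendsto_prod_finite_subsets_remove[of "\<lambda>m. sigma_factor (z + p) (m + p)" _ "L - {- p}"
        "L - {0, - p}"] nonzero
    by auto
  from lim_zp lim_z
  have "((\<lambda>F. (\<Prod>m\<in>F. sigma_factor (z + p) (m + p)) / (\<Prod>m\<in>F. sigma_factor z m)) \<longlongrightarrow> shift_factor p z)
           (finite_subsets_at_top (L - {0, - p}))"
    unfolding shift_factor_def using sigma_product_nonzero[OF assms(3)] nonzero
    by (intro tendsto_divide) auto
  thus ?thesis by (simp add: prod_dividef)
qed

lemma weierstrass_sigma_shift: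
  assumes "p \<in> L" "p \<noteq> 0" "z \<notin> L"
  shows "weierstrass_sigma L (z + p) = - exp (3 / 2 + 3 * z / p) * shift_factor p z * weierstrass_sigma L z"
proof -
  have "z + p \<noteq> 0" "z \<noteq> - p"
    using assms lattice_uminus[of p] by (auto simp: add_eq_0_iff)
  hence "sigma_factor z (- p) \<noteq> 0" "sigma_factor (z + p) p \<noteq> 0"
    using assms by (auto simp: sigma_factor_eq_0_iff)
  hence "sigma_product (z + p)
      = sigma_factor (z + p) p / sigma_factor z (- p) * shift_factor p z * sigma_product z"
    using sigma_product_nonzero[OF assms(3)] by (simp add: shift_factor_def field_simps)
  also have "sigma_factor (z + p) p / sigma_factor z (- p) = - exp (3 / 2 + 3 * z / p) * z / (z + p)"
    using assms(2) \<open>z + p \<noteq> 0\<close> by (rule sigma_factor_period_ratio)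
  finally show ?thesis
    using \<open>z + p \<noteq> 0\<close> by (simp add: weierstrass_sigma_eq field_simps)
qed

lemma summable_inverse_mult_shift_square: "(\<lambda>m. 1 / (m * (m + p)\<^sup>2)) summable_on (L - {0, - p})"
  by (rule summable_on_lattice_cubic_decay[where R = "2 * norm p" and K = 4])
     (auto intro: norm_inverse_mult_shift_square_le)

lemma summable_inverse_shift_square_diff: "(\<lambda>m. 1 / (m + p)\<^sup>2 - 1 / m\<^sup>2) summable_on (L - {0, - p})"
  by (rule summable_on_lattice_cubic_decay[where R = "2 * norm p" and K = "12 * norm p"])
     (auto intro: norm_inverse_shift_square_diff_le)

lemma infsum_inverse_shift_square_diff_eq_0:
  assumes "p \<in> L"
  shows "infsum (\<lambda>m. 1 / (m + p)\<^sup>2 - 1 / m\<^sup>2) (L - {0, - p}) = 0"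
proof -
  define M where "M = L - {0, - p}"
  define t where "t = (\<lambda>m::complex. 1 / (m + p)\<^sup>2 - 1 / m\<^sup>2)"
  have "bij_betw (\<lambda>m. - m - p) M M"
    by (rule bij_betw_byWitness[where f' = "\<lambda>m. - m - p"])
       (use assms in \<open>auto simp: M_def lattice_diff lattice_uminus add_eq_0_iff\<close>)
  hence "infsum (\<lambda>m. t (- m - p)) M = infsum t M"
    by (rule infsum_reindex_bij_betw)
  moreover have "t (- m - p) = - t m" for m
    by (simp add: t_def power2_eq_square algebra_simps)
  ultimately have "- infsum t M = infsum t M"
    by (simp add: infsum_uminus)
  thus ?thesis by (simp add: t_def M_def)
qed

lemma shift_factor_quotient:
  assumes p: "p \<in> L" "p \<noteq> 0" and "z \<notin> L" "w \<notin> L"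
  shows "shift_factor p z =
           shift_factor p w * exp (- (z - w) * p\<^sup>2 * infsum (\<lambda>m. 1 / (m * (m + p)\<^sup>2)) (L - {0, - p}))"
proof -
  define M where "M = L - {0, - p}"
  define s where "s = (\<lambda>m::complex. 1 / (m * (m + p)\<^sup>2))"
  define t where "t = (\<lambda>m::complex. 1 / (m + p)\<^sup>2 - 1 / m\<^sup>2)"
  define d where "d = (\<lambda>m. - (z - w) * p\<^sup>2 * s m + (z\<^sup>2 - w\<^sup>2) / 2 * t m)"
  define r where "r = (\<lambda>x m. sigma_factor (x + p) (m + p) / sigma_factor x m)"
  have "(d has_sum (- (z - w) * p\<^sup>2 * infsum s M + (z\<^sup>2 - w\<^sup>2) / 2 * infsum t M)) M"
    unfolding d_def s_def t_def M_def
    by (intro has_sum_add has_sum_cmult_right has_sum_infsum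
          summable_inverse_mult_shift_square summable_inverse_shift_square_diff)
  hence sum_d: "(d has_sum (- (z - w) * p\<^sup>2 * infsum s M)) M"
    using infsum_inverse_shift_square_diff_eq_0[OF p(1)] by (simp add: t_def M_def)
  have r_eq: "r z m = r w m * exp (d m)" if "m \<in> M" for m
  proof -
    have m: "m \<noteq> 0" "m + p \<noteq> 0" "m \<noteq> z" "m \<noteq> w"
      using that assms by (auto simp: M_def add_eq_0_iff)
    define e where "e = (\<lambda>x. (x + p) / (m + p) + (x + p)\<^sup>2 / (2 * (m + p)\<^sup>2) - (x / m + x\<^sup>2 / (2 * m\<^sup>2)))"
    have "e z - e w = d m"
      using sigma_factor_exponent_difference[OF m(1,2), of z w] by (simp add: e_def d_def s_def t_def)
    hence "exp (e z) = exp (e w) * exp (d m)"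
      by (simp add: exp_add[symmetric] algebra_simps)
    thus ?thesis
      unfolding r_def sigma_factor_shift_quotient[OF m(1-3)] sigma_factor_shift_quotient[OF m(1,2,4)]
      by (simp add: e_def)
  qed
  have "((\<lambda>F. (\<Prod>m\<in>F. r w m) * exp (sum d F)) \<longlongrightarrow> shift_factor p w * exp (- (z - w) * p\<^sup>2 * infsum s M))
          (finite_subsets_at_top M)"
    using tendsto_shift_factor[OF p \<open>w \<notin> L\<close>] sum_d unfolding has_sum_def r_def M_def
    by (intro tendsto_mult tendsto_exp)
  moreover have "\<forall>\<^sub>F F in finite_subsets_at_top M. (\<Prod>m\<in>F. r w m) * exp (sum d F) = (\<Prod>m\<in>F. r z m)"
  proof (intro eventually_finite_subsets_at_top_weakI)
    fix F assume "finite F" "F \<subseteq> M"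
    hence "(\<Prod>m\<in>F. r z m) = (\<Prod>m\<in>F. r w m * exp (d m))"
      using r_eq by (intro prod.cong) auto
    thus "(\<Prod>m\<in>F. r w m) * exp (sum d F) = (\<Prod>m\<in>F. r z m)"
      using \<open>finite F\<close> by (simp add: prod.distrib exp_sum)
  qed
  ultimately have "((\<lambda>F. \<Prod>m\<in>F. r z m) \<longlongrightarrow> shift_factor p w * exp (- (z - w) * p\<^sup>2 * infsum s M))
                     (finite_subsets_at_top M)"
    by (rule Lim_transform_eventually)
  with tendsto_shift_factor[OF p \<open>z \<notin> L\<close>] show ?thesis
    unfolding r_def s_def M_def by (auto intro: tendsto_unique[OF finite_subsets_at_top_neq_bot])
qed

lemma weierstrass_sigma_quasi_period_quotient:
  assumes p: "p \<in> L" "p \<noteq> 0" and "z \<notin> L" "w \<notin> L"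
  shows "weierstrass_sigma L z / weierstrass_sigma L w * (weierstrass_sigma L (w + p) / weierstrass_sigma L (z + p))
         = exp (- 3 * (z - w) / p + (z - w) * p\<^sup>2 * infsum (\<lambda>m. 1 / (m * (m + p)\<^sup>2)) (L - {0, - p}))"
proof -
  define S where "S = infsum (\<lambda>m. 1 / (m * (m + p)\<^sup>2)) (L - {0, - p})"
  define \<sigma> where "\<sigma> = weierstrass_sigma L"
  have "z + p \<notin> L" "w + p \<notin> L"
    using assms lattice_diff by force+
  hence nonzero: "\<sigma> z \<noteq> 0" "\<sigma> w \<noteq> 0" "\<sigma> (z + p) \<noteq> 0" "\<sigma> (w + p) \<noteq> 0"
    using assms by (simp_all add: \<sigma>_def weierstrass_sigma_eq_0_iff)
  have shift_z: "\<sigma> (z + p) = - exp (3 / 2 + 3 * z / p) * shift_factor p z * \<sigma> z"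
    and shift_w: "\<sigma> (w + p) = - exp (3 / 2 + 3 * w / p) * shift_factor p w * \<sigma> w"
    using weierstrass_sigma_shift[OF p] assms by (simp_all add: \<sigma>_def)
  have "shift_factor p z \<noteq> 0" "shift_factor p w \<noteq> 0"
    using nonzero shift_z shift_w by auto
  have "\<sigma> z / \<sigma> w * (\<sigma> (w + p) / \<sigma> (z + p))
      = exp (3 / 2 + 3 * w / p) * shift_factor p w / (exp (3 / 2 + 3 * z / p) * shift_factor p z)"
    unfolding shift_z shift_w using nonzero(1,2) \<open>shift_factor p z \<noteq> 0\<close> by (simp add: field_simps)
  also have "\<dots> = exp (3 / 2 + 3 * w / p) / exp (3 / 2 + 3 * z / p) / exp (- (z - w) * p\<^sup>2 * S)"
    unfolding shift_factor_quotient[OF assms] S_def using \<open>shift_factor p w \<noteq> 0\<close> by (simp add: field_simps)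
  also have "\<dots> = exp ((3 / 2 + 3 * w / p) - (3 / 2 + 3 * z / p) - (- (z - w) * p\<^sup>2 * S))"
    by (simp only: exp_diff)
  also have "(3 / 2 + 3 * w / p) - (3 / 2 + 3 * z / p) - (- (z - w) * p\<^sup>2 * S)
      = - 3 * (z - w) / p + (z - w) * p\<^sup>2 * S"
    using p(2) by (simp add: field_simps)
  finally show ?thesis by (simp add: \<sigma>_def S_def)
qed

end

theorem mainTheorem1:
  fixes p :: "nat \<Rightarrow> complex" and \<xi>0 :: complex and j :: nat
  assumes indep: "\<forall>a b :: real. of_real a * p 1 + of_real b * p 2 = 0 \<longrightarrow> a = 0 \<and> b = 0"
    and j: "j \<in> {1, 2}"
  defines "L \<equiv> lattice (p 1) (p 2)"
  defines "\<sigma> \<equiv> weierstrass_sigma L"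
  defines "v \<equiv> - 3 * \<xi>0 / p j
               + \<xi>0 * (p j)\<^sup>2 * infsum (\<lambda>l. 1 / (l * (l + p j)\<^sup>2)) (L - {0, - p j})"
  shows "\<forall>z. \<sigma> (- \<xi>0 + z) \<noteq> 0 \<and> \<sigma> (z + p j) \<noteq> 0 \<longrightarrow>
           \<sigma> z / \<sigma> (- \<xi>0 + z) * (\<sigma> (- \<xi>0 + z + p j) / \<sigma> (z + p j)) = exp v"
proof (intro allI impI)
  interpret lat: lattice_basis "p 1" "p 2"
    using indep by unfold_locales
  have p: "p j \<in> L" "p j \<noteq> 0"
    using j lat.basis_in_lattice lat.basis_nonzero by (auto simp: L_def)
  fix z assume "\<sigma> (- \<xi>0 + z) \<noteq> 0 \<and> \<sigma> (z + p j) \<noteq> 0"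
  hence "- \<xi>0 + z \<notin> L" "z + p j \<notin> L"
    using lat.weierstrass_sigma_eq_0_iff unfolding \<sigma>_def L_def by blast+
  hence "z \<notin> L" "- \<xi>0 + z \<notin> L"
    using p(1) lat.lattice_add unfolding L_def by blast+
  from lat.weierstrass_sigma_quasi_period_quotient[OF p[unfolded L_def] this[unfolded L_def]]
  show "\<sigma> z / \<sigma> (- \<xi>0 + z) * (\<sigma> (- \<xi>0 + z + p j) / \<sigma> (z + p j)) = exp v"
    by (simp add: \<sigma>_def v_def L_def)
qed

end
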